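(* Let $\mathcal N:\mathbb R^{n_0}\to\mathbb R^{n_L}$ be a random fully connected ReLU network as described in the context, let $\gamma:[0,1]\to\mathbb R^{n_0}$ be a smooth unit-speed curve and $M=\gamma([0,1])$ (so $M$ has unit length). Then for every $t\in[0,1]$ the Jacobian $J_{\gamma(t)}$ exists almost surely, and for every integer $m\ge1$, $$\mathbb E\big[\mathrm{len}(\mathcal N(M))^m\big]\le\int_0^1\mathbb E\big[\|J_{\gamma(t)}\gamma'(t)\|^m\big]\,dt.$$
   Context: Fix integers $L\ge1$ and $n_0,\dots,n_L\ge1$. The network $\mathcal N:\mathbb R^{n_0}\to\mathbb R^{n_L}$ with hidden widths $n_1,\dots,n_{L-1}$ is defined by $z^{(1)}(x)=W^{(1)}x+b^{(1)}$, $z^{(\ell)}(x)=W^{(\ell)}\,\mathrm{ReLU}(z^{(\ell-1)}(x))+b^{(\ell)}$ for $2\le\ell\le L$, and $\mathcal N(x)=z^{(L)}(x)$, where $\mathrm{ReLU}(t)=\max(t,0)$ is applied componentwise, $W^{(\ell)}$ is an $n_\ell\times n_{\ell-1}$ matrix and $b^{(\ell)}\in\mathbb R^{n_\ell}$. All entries of all $W^{(\ell)}$ and $b^{(\ell)}$ are independent centered Gaussian random variables with $\mathrm{Var}(W^{(\ell)}_{ij})=2/n_{\ell-1}$ for $1\le\ell\le L-1$, $\mathrm{Var}(W^{(L)}_{ij})=1/n_{L-1}$, and $\mathrm{Var}(b^{(\ell)}_j)=C_b$ for a fixed constant $C_b>0$. The input-output Jacobian at $x$ is $J_x=(\partial\mathcal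 N_i/\partial x_j(x))_{1\le i\le n_L,1\le j\le n_0}$ where it exists. $\mathrm{len}(\mathcal N(M)):=\int_0^1\|(\mathcal N\circ\gamma)'(t)\|\,dt$, the length of the Lipschitz path $\mathcal N\circ\gamma$. *)

theory Defs
  imports "HOL-Probability.Probability"
begin

text \<open>Parameters of the network are indexed by
  Inl (l, i, j) : entry W^(l)_{ij}  and  Inr (l, j) : entry b^(l)_j.
  Vectors in R^k are functions nat => real; only the coordinates < k matter.\<close>

type_synonym param_idx = "(nat \<times> nat \<times> nat) + (nat \<times> nat)"

definition relu :: "real \<Rightarrow> real" where
  "relu t = max t 0"

definition param_index :: "(nat \<Rightarrow> nat) \<Rightarrow> nat \<Rightarrow> param_idx set" where
  "param_index n L =
     {Inl (l, i, j) | l i j. 1 \<le> l \<and> l \<le> L \<and> i < n l \<and> j < n (l - 1)}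
   \<union> {Inr (l, j) | l j. 1 \<le> l \<and> l \<le> L \<and> j < n l}"

definition param_var :: "(nat \<Rightarrow> nat) \<Rightarrow> nat \<Rightarrow> real \<Rightarrow> param_idx \<Rightarrow> real" where
  "param_var n L Cb p = (case p of
      Inl (l, i, j) \<Rightarrow> (if l \<le> L - 1 then 2 / real (n (l - 1)) else 1 / real (n (L - 1)))
    | Inr (l, j) \<Rightarrow> Cb)"

definition relu_net_measure :: "(nat \<Rightarrow> nat) \<Rightarrow> nat \<Rightarrow> real \<Rightarrow> (param_idx \<Rightarrow> real) measure" where
  "relu_net_measure n L Cb =
     PiM (param_index n L) (\<lambda>p. density lborel (normal_density 0 (sqrt (param_var n L Cb p))))"

text \<open>preact n \<theta> l x = z^(l)(x) for l \<ge> 1 (preact n \<theta> 0 x = x is the input).\<close>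
fun preact :: "(nat \<Rightarrow> nat) \<Rightarrow> (param_idx \<Rightarrow> real) \<Rightarrow> nat \<Rightarrow> (nat \<Rightarrow> real) \<Rightarrow> (nat \<Rightarrow> real)" where
  "preact n \<theta> 0 x = x"
| "preact n \<theta> (Suc l) x =
     (\<lambda>j. (\<Sum>k<n l. \<theta> (Inl (Suc l, j, k)) * (if l = 0 then x k else relu (preact n \<theta> l x k)))
          + \<theta> (Inr (Suc l, j)))"

definition net :: "(nat \<Rightarrow> nat) \<Rightarrow> nat \<Rightarrow> (param_idx \<Rightarrow> real) \<Rightarrow> (nat \<Rightarrow> real) \<Rightarrow> (nat \<Rightarrow> real)" where
  "net n L \<theta> x = preact n \<theta> L x"

definition vnorm :: "nat \<Rightarrow> (nat \<Rightarrow> real) \<Rightarrow> real" where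
  "vnorm k v = sqrt (\<Sum>i<k. (v i)\<^sup>2)"

definition partial_at :: "((nat \<Rightarrow> real) \<Rightarrow> (nat \<Rightarrow> real)) \<Rightarrow> (nat \<Rightarrow> real) \<Rightarrow> nat \<Rightarrow> nat \<Rightarrow> real \<Rightarrow> real" where
  "partial_at F x i j = (\<lambda>s. F (x(j := x j + s)) i)"

definition jacobian_exists :: "nat \<Rightarrow> nat \<Rightarrow> ((nat \<Rightarrow> real) \<Rightarrow> (nat \<Rightarrow> real)) \<Rightarrow> (nat \<Rightarrow> real) \<Rightarrow> bool" where
  "jacobian_exists n0 nL F x \<longleftrightarrow>
     (\<forall>i<nL. \<forall>j<n0. partial_at F x i j differentiable (at 0))"

definition jacobian :: "((nat \<Rightarrow> real) \<Rightarrow> (nat \<Rightarrow> real)) \<Rightarrow> (nat \<Rightarrow> real) \<Rightarrow> nat \<Rightarrow> nat \<Rightarrow> real" where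
  "jacobian F x i j = deriv (partial_at F x i j) 0"

definition jac_apply :: "nat \<Rightarrow> ((nat \<Rightarrow> real) \<Rightarrow> (nat \<Rightarrow> real)) \<Rightarrow> (nat \<Rightarrow> real) \<Rightarrow> (nat \<Rightarrow> real) \<Rightarrow> (nat \<Rightarrow> real)" where
  "jac_apply n0 F x v = (\<lambda>i. \<Sum>j<n0. jacobian F x i j * v j)"

definition vderiv :: "(real \<Rightarrow> real) \<Rightarrow> real \<Rightarrow> real" where
  "vderiv f t = (SOME D. (f has_real_derivative D) (at t within {0..1}))"

definition smooth_curve :: "nat \<Rightarrow> (nat \<Rightarrow> real \<Rightarrow> real) \<Rightarrow> bool" where
  "smooth_curve n0 \<gamma> \<longleftrightarrow>
     (\<forall>k<n0. \<exists>D :: nat \<Rightarrow> real \<Rightarrow> real. D 0 = \<gamma> k \<and>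
        (\<forall>r. \<forall>t\<in>{0..1}. (D r has_real_derivative D (Suc r) t) (at t within {0..1})))"

definition unit_speed :: "nat \<Rightarrow> (nat \<Rightarrow> real \<Rightarrow> real) \<Rightarrow> bool" where
  "unit_speed n0 \<gamma> \<longleftrightarrow> (\<forall>t\<in>{0..1}. vnorm n0 (\<lambda>k. vderiv (\<gamma> k) t) = 1)"

definition curve_pt :: "(nat \<Rightarrow> real \<Rightarrow> real) \<Rightarrow> real \<Rightarrow> (nat \<Rightarrow> real)" where
  "curve_pt \<gamma> t = (\<lambda>k. \<gamma> k t)"

definition curve_vel :: "(nat \<Rightarrow> real \<Rightarrow> real) \<Rightarrow> real \<Rightarrow> (nat \<Rightarrow> real)" where
  "curve_vel \<gamma> t = (\<lambda>k. vderiv (\<gamma> k) t)"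

text \<open>len(F(M)) = integral over [0,1] of |(F o gamma)'(t)|.\<close>
definition image_len :: "nat \<Rightarrow> ((nat \<Rightarrow> real) \<Rightarrow> (nat \<Rightarrow> real)) \<Rightarrow> (nat \<Rightarrow> real \<Rightarrow> real) \<Rightarrow> ennreal" where
  "image_len nL F \<gamma> =
     (\<integral>\<^sup>+ t\<in>{0..1}. ennreal (vnorm nL (\<lambda>i. vderiv (\<lambda>s. F (curve_pt \<gamma> s) i) t)) \<partial>lborel)"

end

theory Submission
  imports Defs
begin

(*
  Away from the event that some hidden preactivation vanishes at the input x, the network is
  affine near x, with Jacobian the product of the weight matrices and the ReLU gates 1[z > 0].
  Hence the Jacobian exists and the chain rule gives |(N o gamma)'(t)| = |J_gamma(t) gamma'(t)|.
  For fixed x the exceptional event is null: each hidden preactivation is its own bias plus a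
  quantity independent of that bias, and Gaussian biases have no atoms.  By Fubini it is then
  null for almost every t, for almost every parameter.  Since [0,1] has unit length, Jensen gives
  len^m <= integral of |J gamma'|^m over [0,1], and Tonelli exchanges expectation and integral.
*)

section \<open>Local linearity of the network\<close>

definition nondegenerate :: "(nat \<Rightarrow> nat) \<Rightarrow> nat \<Rightarrow> (param_idx \<Rightarrow> real) \<Rightarrow> (nat \<Rightarrow> real) \<Rightarrow> bool" where
  "nondegenerate n L \<theta> x \<longleftrightarrow> (\<forall>l k. 1 \<le> l \<longrightarrow> l < L \<longrightarrow> k < n l \<longrightarrow> preact n \<theta> l x k \<noteq> 0)"

fun preact_jac :: "(nat \<Rightarrow> nat) \<Rightarrow> (param_idx \<Rightarrow> real) \<Rightarrow> nat \<Rightarrow> (nat \<Rightarrow> real) \<Rightarrow> nat \<Rightarrow> nat \<Rightarrow> real" where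
  "preact_jac n \<theta> 0 x i k = (if i = k then 1 else 0)"
| "preact_jac n \<theta> (Suc l) x j k =
     (\<Sum>k'<n l. \<theta> (Inl (Suc l, j, k')) *
        (if l = 0 \<or> 0 < preact n \<theta> l x k' then preact_jac n \<theta> l x k' k else 0))"

lemma eventually_relu_add:
  assumes "p \<noteq> 0" and "(d \<longlongrightarrow> 0) F"
  shows "\<forall>\<^sub>F s in F. relu (p + d s) = relu p + (if 0 < p then d s else 0)"
proof (cases "0 < p")
  case True
  from order_tendstoD(1)[OF assms(2), of "- p"] True show ?thesis
    by (auto simp: relu_def elim!: eventually_mono)
next
  case False
  with assms(1) have "p < 0" by simp
  from order_tendstoD(2)[OF assms(2), of "- p"] this show ?thesis
    by (auto simp: relu_def elim!: eventually_mono)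
qed

definition layer_output :: "(nat \<Rightarrow> nat) \<Rightarrow> (param_idx \<Rightarrow> real) \<Rightarrow> nat \<Rightarrow> (nat \<Rightarrow> real) \<Rightarrow> nat \<Rightarrow> real" where
  "layer_output n \<theta> l x k = (if l = 0 then x k else relu (preact n \<theta> l x k))"

lemma preact_Suc_layer_output:
  "preact n \<theta> (Suc l) x j = (\<Sum>k<n l. \<theta> (Inl (Suc l, j, k)) * layer_output n \<theta> l x k) + \<theta> (Inr (Suc l, j))"
  by (simp add: layer_output_def)

lemma layer_output_eventually_linear:
  assumes "l < L" and "nondegenerate n L \<theta> x"
    and "\<forall>\<^sub>F s in F. \<forall>k<n l. preact n \<theta> l (Y s) k = preact n \<theta> l x k + \<Delta> s k"
    and "\<And>k. ((\<lambda>s. \<Delta> s k) \<longlongrightarrow> 0) F"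
  shows "\<forall>\<^sub>F s in F. \<forall>k<n l. layer_output n \<theta> l (Y s) k
           = layer_output n \<theta> l x k + (if l = 0 \<or> 0 < preact n \<theta> l x k then \<Delta> s k else 0)"
proof (cases "l = 0")
  case True
  with assms(3) show ?thesis
    by (auto simp: layer_output_def elim!: eventually_mono)
next
  case False
  have "\<forall>\<^sub>F s in F. relu (preact n \<theta> l x k + \<Delta> s k)
      = relu (preact n \<theta> l x k) + (if 0 < preact n \<theta> l x k then \<Delta> s k else 0)" if "k < n l" for k
    using assms(1,2,4) False that by (intro eventually_relu_add) (auto simp: nondegenerate_def)
  then have "\<forall>\<^sub>F s in F. \<forall>k\<in>{..<n l}. relu (preact n \<theta> l x k + \<Delta> s k)
      = relu (preact n \<theta> l x k) + (if 0 < preact n \<theta> l x k then \<Delta> s k else 0)"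
    by (intro eventually_ball_finite) auto
  from assms(3) this show ?thesis
    by eventually_elim (use False in \<open>simp add: layer_output_def\<close>)
qed

lemma preact_eventually_linear:
  assumes "l \<le> L" and "nondegenerate n L \<theta> x" and "\<forall>k<n 0. ((\<lambda>s. Y s k) \<longlongrightarrow> x k) F"
  shows "\<forall>\<^sub>F s in F. \<forall>i<n l.
           preact n \<theta> l (Y s) i = preact n \<theta> l x i + (\<Sum>k<n 0. preact_jac n \<theta> l x i k * (Y s k - x k))"
  using assms(1)
proof (induction l)
  case 0
  show ?case
    by (intro always_eventually allI impI) (simp add: if_distrib if_distribR sum.delta cong: if_cong)
next
  case (Suc l)
  define gate where "gate k \<longleftrightarrow> l = 0 \<or> 0 < preact n \<theta> l x k" for k
  define \<Delta> where "\<Delta> s k = (\<Sum>k'<n 0. preact_jac n \<theta> l x k k' * (Y s k' - x k'))" for s k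
  have "((\<lambda>s. \<Delta> s k) \<longlongrightarrow> 0) F" for k
    unfolding \<Delta>_def using assms(3)
    by (auto intro!: tendsto_null_sum tendsto_mult_right_zero simp: LIM_zero_iff)
  with Suc assms(2) have "\<forall>\<^sub>F s in F. \<forall>k<n l.
      layer_output n \<theta> l (Y s) k = layer_output n \<theta> l x k + (if gate k then \<Delta> s k else 0)"
    unfolding gate_def by (intro layer_output_eventually_linear) (simp_all add: \<Delta>_def)
  then show ?case
  proof eventually_elim
    case (elim s)
    show ?case
    proof (intro allI impI)
      fix j
      let ?w = "\<lambda>k. \<theta> (Inl (Suc l, j, k))"
      have "preact n \<theta> (Suc l) (Y s) j
          = preact n \<theta> (Suc l) x j + (\<Sum>k<n l. ?w k * (if gate k then \<Delta> s k else 0))"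
        using elim by (simp add: preact_Suc_layer_output algebra_simps sum.distrib del: preact.simps)
      also have "(\<Sum>k<n l. ?w k * (if gate k then \<Delta> s k else 0))
          = (\<Sum>k<n l. \<Sum>k'<n 0. ?w k * (if gate k then preact_jac n \<theta> l x k k' else 0) * (Y s k' - x k'))"
        by (intro sum.cong) (auto simp: \<Delta>_def sum_distrib_left mult.assoc)
      also have "\<dots> = (\<Sum>k'<n 0. preact_jac n \<theta> (Suc l) x j k' * (Y s k' - x k'))"
        by (simp add: gate_def sum_distrib_right sum.swap[of _ "{..<n l}"])
      finally show "preact n \<theta> (Suc l) (Y s) j = preact n \<theta> (Suc l) x j
          + (\<Sum>k'<n 0. preact_jac n \<theta> (Suc l) x j k' * (Y s k' - x k'))" .
    qed
  qed
qed

lemma net_partial_has_derivative: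
  assumes "nondegenerate n L \<theta> x" and "i < n L" and "j < n 0"
  shows "(partial_at (net n L \<theta>) x i j has_real_derivative preact_jac n \<theta> L x i j) (at 0)"
proof -
  define Y where "Y s = x(j := x j + s)" for s :: real
  have "\<forall>k<n 0. ((\<lambda>s. Y s k) \<longlongrightarrow> x k) (nhds 0)"
  proof (intro allI impI)
    fix k
    show "((\<lambda>s. Y s k) \<longlongrightarrow> x k) (nhds 0)"
      unfolding Y_def by (cases "k = j") (auto intro!: tendsto_eq_intros filterlim_ident)
  qed
  from preact_eventually_linear[OF order_refl assms(1) this]
  have "\<forall>\<^sub>F s in nhds 0. partial_at (net n L \<theta>) x i j s = preact n \<theta> L x i + preact_jac n \<theta> L x i j * s"
  proof eventually_elim
    case (elim s)
    have "(\<Sum>k<n 0. preact_jac n \<theta> L x i k * (Y s k - x k)) = preact_jac n \<theta> L x i j * s"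
      using assms(3) by (simp add: Y_def if_distrib if_distribR sum.delta' cong: if_cong)
    moreover have "partial_at (net n L \<theta>) x i j s = preact n \<theta> L (Y s) i"
      by (simp add: partial_at_def net_def Y_def)
    ultimately show ?case using elim assms(2) by simp
  qed
  moreover have "((\<lambda>s. preact n \<theta> L x i + preact_jac n \<theta> L x i j * s)
      has_real_derivative preact_jac n \<theta> L x i j) (at 0)"
    by (auto intro!: derivative_eq_intros)
  ultimately show ?thesis
    by (simp add: DERIV_cong_ev)
qed

lemma jacobian_exists_if_nondegenerate:
  "nondegenerate n L \<theta> x \<Longrightarrow> jacobian_exists (n 0) (n L) (net n L \<theta>) x"
  unfolding jacobian_exists_def real_differentiable_def by (blast intro: net_partial_has_derivative)

lemma jac_apply_if_nondegenerate:
  assumes "nondegenerate n L \<theta> x" and "i < n L"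
  shows "jac_apply (n 0) (net n L \<theta>) x v i = (\<Sum>k<n 0. preact_jac n \<theta> L x i k * v k)"
  unfolding jac_apply_def jacobian_def
  using DERIV_imp_deriv[OF net_partial_has_derivative[OF assms]] by simp

lemma vderiv_eqI:
  assumes "t \<in> {0..1}" and "(f has_real_derivative D) (at t within {0..1})"
  shows "vderiv f t = D"
proof -
  have "(f has_real_derivative vderiv f t) (at t within {0..1})"
    unfolding vderiv_def using assms(2) by (rule someI)
  with assms show ?thesis
    using vector_derivative_unique_within_closed_interval[of 0 1 t f "vderiv f t" D]
    by (simp add: has_real_derivative_iff_has_vector_derivative)
qed

lemma smooth_curve_has_vderiv:
  assumes "smooth_curve n0 \<gamma>" and "k < n0" and "t \<in> {0..1}"
  shows "(\<gamma> k has_real_derivative vderiv (\<gamma> k) t) (at t within {0..1})"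
proof -
  obtain D where "D 0 = \<gamma> k" and "\<forall>r. \<forall>t\<in>{0..1}. (D r has_real_derivative D (Suc r) t) (at t within {0..1})"
    using assms(1,2) unfolding smooth_curve_def by blast
  with assms(3) have "(\<gamma> k has_real_derivative D 1 t) (at t within {0..1})"
    by (metis One_nat_def)
  with assms(3) show ?thesis
    by (simp add: vderiv_eqI)
qed

lemma smooth_curve_continuous_on:
  "smooth_curve n0 \<gamma> \<Longrightarrow> k < n0 \<Longrightarrow> continuous_on {0..1} (\<gamma> k)"
  by (rule DERIV_continuous_on) (rule smooth_curve_has_vderiv)

lemma smooth_curve_continuous_on_vderiv:
  assumes "smooth_curve n0 \<gamma>" and "k < n0"
  shows "continuous_on {0..1} (vderiv (\<gamma> k))"
proof -
  obtain D where "D 0 = \<gamma> k" and D: "\<forall>r. \<forall>t\<in>{0..1}. (D r has_real_derivative D (Suc r) t) (at t within {0..1})"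
    using assms unfolding smooth_curve_def by blast
  then have "vderiv (\<gamma> k) t = D 1 t" if "t \<in> {0..1}" for t
    using that by (metis One_nat_def vderiv_eqI)
  moreover have "continuous_on {0..1} (D 1)"
    using D by (intro DERIV_continuous_on) blast
  ultimately show ?thesis
    by (metis continuous_on_cong)
qed

lemma vderiv_net_curve:
  assumes "smooth_curve (n 0) \<gamma>" and "t \<in> {0..1}"
    and "nondegenerate n L \<theta> (curve_pt \<gamma> t)" and "i < n L"
  shows "vderiv (\<lambda>s. net n L \<theta> (curve_pt \<gamma> s) i) t
       = jac_apply (n 0) (net n L \<theta>) (curve_pt \<gamma> t) (curve_vel \<gamma> t) i"
proof -
  let ?x = "curve_pt \<gamma> t" and ?F = "at t within {0..1}"
  let ?lin = "\<lambda>s. preact n \<theta> L ?x i + (\<Sum>k<n 0. preact_jac n \<theta> L ?x i k * (\<gamma> k s - \<gamma> k t))"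
  have "\<forall>k<n 0. ((\<lambda>s. curve_pt \<gamma> s k) \<longlongrightarrow> ?x k) ?F"
    using smooth_curve_has_vderiv[OF assms(1) _ assms(2)]
    by (auto simp: curve_pt_def continuous_within[symmetric] intro: DERIV_continuous)
  from preact_eventually_linear[OF order_refl assms(3) this]
  have "\<forall>\<^sub>F s in ?F. net n L \<theta> (curve_pt \<gamma> s) i = ?lin s"
    by eventually_elim (use assms(4) in \<open>simp add: net_def curve_pt_def\<close>)
  moreover have "(?lin has_real_derivative (\<Sum>k<n 0. preact_jac n \<theta> L ?x i k * vderiv (\<gamma> k) t)) ?F"
    by (auto intro!: derivative_eq_intros DERIV_sum smooth_curve_has_vderiv[OF assms(1) _ assms(2)]
        simp: mult.commute)
  ultimately have "((\<lambda>s. net n L \<theta> (curve_pt \<gamma> s) i) has_real_derivative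
      (\<Sum>k<n 0. preact_jac n \<theta> L ?x i k * vderiv (\<gamma> k) t)) ?F"
    by (subst has_field_derivative_cong_eventually) (simp_all add: net_def curve_pt_def)
  then show ?thesis
    using assms by (simp add: vderiv_eqI jac_apply_if_nondegenerate curve_vel_def)
qed

section \<open>Jensen's inequality for powers\<close>

lemma power_tangent_line_le:
  fixes a r :: real
  assumes "0 \<le> a" and "0 \<le> r"
  shows "r ^ m + real m * r ^ (m - 1) * (a - r) \<le> a ^ m"
proof (cases "r = 0 \<or> m = 0")
  case True
  with assms show ?thesis by (cases m) (auto simp: power_0_left)
next
  case False
  then have r: "0 < r" and rm: "r * r ^ (m - 1) = r ^ m"
    using assms(2) by (auto simp flip: power_Suc)
  have "1 + real m * ((a - r) / r) \<le> (1 + (a - r) / r) ^ m"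
    using r assms(1) by (intro Bernoulli_inequality) (simp add: field_simps)
  then have "r ^ m * (1 + real m * ((a - r) / r)) \<le> r ^ m * (a / r) ^ m"
    using r by (intro mult_left_mono) (auto simp: field_simps)
  also have "r ^ m * (1 + real m * ((a - r) / r)) = r ^ m + real m * r ^ (m - 1) * (a - r)"
    using r rm by (simp add: field_simps)
  finally show ?thesis
    using r by (simp add: power_divide)
qed

lemma le_one_add_power:
  fixes a :: real
  assumes "0 \<le> a" and "1 \<le> m"
  shows "a \<le> 1 + a ^ m"
proof (cases "a \<le> 1")
  case False
  then have "a ^ 1 \<le> a ^ m"
    using assms(2) by (intro power_increasing) auto
  then show ?thesis
    by simp
qed (use assms(1) in \<open>simp add: add_increasing2\<close>)

lemma (in prob_space) nn_integral_power_le: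
  assumes f: "f \<in> borel_measurable M" and nonneg: "\<And>x. 0 \<le> f x" and "1 \<le> m"
  shows "(\<integral>\<^sup>+ x. ennreal (f x) \<partial>M) ^ m \<le> (\<integral>\<^sup>+ x. ennreal (f x ^ m) \<partial>M)"
proof (cases "(\<integral>\<^sup>+ x. ennreal (f x) \<partial>M) = \<infinity>")
  case True
  have "ennreal (f x) \<le> 1 + ennreal (f x ^ m)" for x
  proof -
    have "ennreal (f x) \<le> ennreal (1 + f x ^ m)"
      using le_one_add_power[OF nonneg \<open>1 \<le> m\<close>] by (rule ennreal_leI)
    then show ?thesis
      using nonneg[of x] by (simp add: ennreal_plus)
  qed
  then have "(\<integral>\<^sup>+ x. ennreal (f x) \<partial>M) \<le> (\<integral>\<^sup>+ x. 1 + ennreal (f x ^ m) \<partial>M)"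
    by (rule nn_integral_mono)
  also have "\<dots> = 1 + (\<integral>\<^sup>+ x. ennreal (f x ^ m) \<partial>M)"
    using f by (simp add: nn_integral_add emeasure_space_1)
  finally have "(\<integral>\<^sup>+ x. ennreal (f x) \<partial>M) \<le> 1 + (\<integral>\<^sup>+ x. ennreal (f x ^ m) \<partial>M)" .
  with True show ?thesis
    by (simp add: top_unique ennreal_add_eq_top)
next
  case False
  then obtain r where r: "(\<integral>\<^sup>+ x. ennreal (f x) \<partial>M) = ennreal r" and "0 \<le> r"
    by (cases "\<integral>\<^sup>+ x. ennreal (f x) \<partial>M") auto
  have "r ^ m + real m * r ^ (m - 1) * f x \<le> f x ^ m + real m * r ^ m" for x
    using power_tangent_line_le[OF nonneg[of x] \<open>0 \<le> r\<close>, of m] \<open>1 \<le> m\<close>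
    by (cases m) (auto simp: algebra_simps)
  then have "ennreal (r ^ m) + ennreal (real m * r ^ (m - 1)) * ennreal (f x)
      \<le> ennreal (f x ^ m) + ennreal (real m * r ^ m)" for x
    using nonneg[of x] \<open>0 \<le> r\<close> by (simp add: ennreal_mult[symmetric] ennreal_plus[symmetric] del: ennreal_plus)
  then have "(\<integral>\<^sup>+ x. ennreal (r ^ m) + ennreal (real m * r ^ (m - 1)) * ennreal (f x) \<partial>M)
      \<le> (\<integral>\<^sup>+ x. ennreal (f x ^ m) + ennreal (real m * r ^ m) \<partial>M)"
    by (rule nn_integral_mono)
  moreover have rm: "r ^ (m - 1) * r = r ^ m"
    using \<open>1 \<le> m\<close> by (cases m) auto
  ultimately have "ennreal (r ^ m) + ennreal (real m * r ^ m)
      \<le> (\<integral>\<^sup>+ x. ennreal (f x ^ m) \<partial>M) + ennreal (real m * r ^ m)"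
    using f \<open>0 \<le> r\<close>
    by (simp add: nn_integral_add nn_integral_cmult emeasure_space_1 r rm mult.assoc
        flip: ennreal_mult)
  then show ?thesis
    using r \<open>0 \<le> r\<close> by (simp add: ennreal_power add.commute[of _ "ennreal (real m * r ^ m)"])
qed

lemma nn_integral_unit_interval_power_le:
  fixes f :: "real \<Rightarrow> real"
  assumes f: "f \<in> borel_measurable lborel" and "\<And>t. 0 \<le> f t" and "1 \<le> m"
  shows "(\<integral>\<^sup>+ t\<in>{0..1}. ennreal (f t) \<partial>lborel) ^ m \<le> (\<integral>\<^sup>+ t\<in>{0..1}. ennreal (f t ^ m) \<partial>lborel)"
proof -
  let ?U = "uniform_measure lborel {0..1::real}"
  interpret prob_space ?U
    by (rule prob_space_uniform_measure) auto
  have "f \<in> borel_measurable ?U"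
    using f by (simp cong: measurable_cong_sets)
  from nn_integral_power_le[OF this assms(2,3)] f show ?thesis
    by (simp add: nn_integral_uniform_measure divide_ennreal_def)
qed

lemma (in sigma_finite_measure) nn_integral_unit_interval_power_swap_le:
  fixes h :: "real \<Rightarrow> 'a \<Rightarrow> real"
  assumes h: "(\<lambda>(t, \<theta>). indicator {0..1} t * h t \<theta>) \<in> borel_measurable (lborel \<Otimes>\<^sub>M M)"
    and nonneg: "\<And>t \<theta>. t \<in> {0..1} \<Longrightarrow> 0 \<le> h t \<theta>" and "1 \<le> m"
  shows "(\<integral>\<^sup>+ \<theta>. (\<integral>\<^sup>+ t\<in>{0..1}. ennreal (h t \<theta>) \<partial>lborel) ^ m \<partial>M)
       \<le> (\<integral>\<^sup>+ t\<in>{0..1}. (\<integral>\<^sup>+ \<theta>. ennreal (h t \<theta> ^ m) \<partial>M) \<partial>lborel)"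
proof -
  interpret pair_sigma_finite lborel M
    by unfold_locales
  define g where "g t \<theta> = indicator {0..1} t * h t \<theta>" for t \<theta>
  have g_nonneg: "0 \<le> g t \<theta>" for t \<theta>
    by (simp add: g_def nonneg indicator_def)
  have [measurable]: "(\<lambda>p. g (fst p) (snd p)) \<in> borel_measurable (lborel \<Otimes>\<^sub>M M)"
    using h by (simp add: g_def case_prod_beta')
  have restrict: "ennreal (h t \<theta> ^ k) * indicator {0..1} t = ennreal (g t \<theta> ^ k) * indicator {0..1} t"
    for t \<theta> and k :: nat
    by (simp add: g_def indicator_def)
  have "(\<integral>\<^sup>+ t\<in>{0..1}. ennreal (g t \<theta>) \<partial>lborel) ^ m \<le> (\<integral>\<^sup>+ t\<in>{0..1}. ennreal (g t \<theta> ^ m) \<partial>lborel)"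
    if "\<theta> \<in> space M" for \<theta>
    by (rule nn_integral_unit_interval_power_le[OF _ g_nonneg \<open>1 \<le> m\<close>])
      (use measurable_Pair1[OF _ that, where f = "\<lambda>p. g (fst p) (snd p)"] in simp)
  then have "(\<integral>\<^sup>+ \<theta>. (\<integral>\<^sup>+ t\<in>{0..1}. ennreal (h t \<theta>) \<partial>lborel) ^ m \<partial>M)
      \<le> (\<integral>\<^sup>+ \<theta>. (\<integral>\<^sup>+ t. ennreal (g t \<theta> ^ m) * indicator {0..1} t \<partial>lborel) \<partial>M)"
    using restrict[where k = 1] by (intro nn_integral_mono) simp
  also have "\<dots> = (\<integral>\<^sup>+ t. (\<integral>\<^sup>+ \<theta>. ennreal (g t \<theta> ^ m) * indicator {0..1} t \<partial>M) \<partial>lborel)"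
    by (intro Fubini') measurable
  also have "\<dots> = (\<integral>\<^sup>+ t\<in>{0..1}. (\<integral>\<^sup>+ \<theta>. ennreal (h t \<theta> ^ m) \<partial>M) \<partial>lborel)"
    by (intro nn_integral_cong) (simp flip: restrict split: split_indicator)
  finally show ?thesis .
qed

section \<open>Almost sure nondegeneracy\<close>

lemma borel_measurable_PiM_component:
  fixes M :: "'i \<Rightarrow> real measure"
  assumes "\<And>i. i \<in> I \<Longrightarrow> sets (M i) = sets borel"
  shows "(\<lambda>\<theta>. \<theta> p) \<in> borel_measurable (PiM I M)"
proof (cases "p \<in> I")
  case True
  then show ?thesis
    using measurable_component_singleton[OF True, of M] assms by (simp cong: measurable_cong_sets)
next
  case False
  then have "\<theta> p = undefined" if "\<theta> \<in> space (PiM I M)" for \<theta>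
    using that by (auto simp: space_PiM)
  then show ?thesis
    by (subst measurable_cong[where g = "\<lambda>_. undefined"]) auto
qed

lemma borel_measurable_layer_output:
  assumes \<Theta>: "\<And>p. (\<lambda>b. \<Theta> b p) \<in> borel_measurable N"
    and X: "\<And>k. k < n 0 \<Longrightarrow> (\<lambda>b. X b k) \<in> borel_measurable N" and "k < n l"
  shows "(\<lambda>b. layer_output n (\<Theta> b) l (X b) k) \<in> borel_measurable N"
  using \<open>k < n l\<close>
proof (induction l arbitrary: k)
  case 0
  then show ?case
    using X by (simp add: layer_output_def)
next
  case (Suc l)
  have "(\<lambda>b. preact n (\<Theta> b) (Suc l) (X b) k) \<in> borel_measurable N"
    using Suc.IH \<Theta> by (simp add: preact_Suc_layer_output del: preact.simps)
  then show ?case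
    unfolding layer_output_def relu_def by simp
qed

lemma borel_measurable_preact:
  assumes "\<And>p. (\<lambda>b. \<Theta> b p) \<in> borel_measurable N"
    and "\<And>k. k < n 0 \<Longrightarrow> (\<lambda>b. X b k) \<in> borel_measurable N" and "0 < l"
  shows "(\<lambda>b. preact n (\<Theta> b) l (X b) j) \<in> borel_measurable N"
proof -
  obtain l' where "l = Suc l'"
    using \<open>0 < l\<close> by (cases l) auto
  with assms borel_measurable_layer_output[OF assms(1,2)] show ?thesis
    by (simp add: preact_Suc_layer_output del: preact.simps)
qed

lemma borel_measurable_preact_jac:
  assumes \<Theta>: "\<And>p. (\<lambda>b. \<Theta> b p) \<in> borel_measurable N"
    and X: "\<And>k. k < n 0 \<Longrightarrow> (\<lambda>b. X b k) \<in> borel_measurable N"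
  shows "(\<lambda>b. preact_jac n (\<Theta> b) l (X b) j k) \<in> borel_measurable N"
proof (induction l arbitrary: j)
  case (Suc l)
  have "(\<lambda>b. \<Theta> b (Inl (Suc l, j, k')) *
      (if l = 0 \<or> 0 < preact n (\<Theta> b) l (X b) k' then preact_jac n (\<Theta> b) l (X b) k' k else 0))
      \<in> borel_measurable N" for k'
  proof (cases "l = 0")
    case False
    note [measurable] = borel_measurable_preact[OF \<Theta> X] Suc.IH
    show ?thesis using False \<Theta> by measurable
  qed (use Suc.IH \<Theta> in simp)
  then show ?case
    by (simp del: preact_jac.simps add: preact_jac.simps(2))
qed simp

lemma pred_nondegenerate:
  assumes "\<And>p. (\<lambda>b. \<Theta> b p) \<in> borel_measurable N"
    and "\<And>k. k < n 0 \<Longrightarrow> (\<lambda>b. X b k) \<in> borel_measurable N"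
  shows "Measurable.pred N (\<lambda>b. nondegenerate n L (\<Theta> b) (X b))"
proof -
  have "nondegenerate n L \<theta> x \<longleftrightarrow> (\<forall>l\<in>{1..<L}. \<forall>k\<in>{..<n l}. preact n \<theta> l x k \<noteq> 0)" for \<theta> x
    by (auto simp: nondegenerate_def)
  moreover note [measurable] = borel_measurable_preact[OF assms]
  ultimately show ?thesis
    by simp
qed

lemma preact_fun_upd_bias:
  "l < l' \<Longrightarrow> preact n (\<theta>(Inr (l', k) := y)) l x = preact n \<theta> l x"
proof (induction l)
  case (Suc l)
  then have "preact n (\<theta>(Inr (l', k) := y)) l x = preact n \<theta> l x"
    by (intro Suc.IH) simp
  with Suc.prems show ?case
    by (simp only: preact.simps) simp
qed simp

lemma finite_param_index: "finite (param_index n L)"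
proof -
  let ?N = "\<Union>l\<le>L. {..<n l}"
  have "param_index n L \<subseteq> Inl ` ({..L} \<times> ?N \<times> ?N) \<union> Inr ` ({..L} \<times> ?N)"
    unfolding param_index_def by (force simp: diff_le_self)
  then show ?thesis
    by (rule finite_subset) auto
qed

lemma AE_PiM_add_component_neq_zero:
  fixes M :: "'i \<Rightarrow> real measure"
  assumes "\<And>i. prob_space (M i)" and "\<And>i. sets (M i) = sets borel"
    and "finite I" and "p \<in> I"
    and f: "f \<in> borel_measurable (PiM I M)" and f_indep: "\<And>\<theta> y. f (\<theta>(p := y)) = f \<theta>"
    and no_atoms: "\<And>a. emeasure (M p) {a} = 0"
  shows "AE \<theta> in PiM I M. f \<theta> + \<theta> p \<noteq> 0"
proof -
  interpret product_prob_space M I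
    using assms(1) by (simp add: product_prob_space_def product_prob_space_axioms_def
        product_sigma_finite_def prob_space_imp_sigma_finite)
  define J where "J = I - {p}"
  have I: "I = insert p J" and "p \<notin> J" and "finite J"
    using assms(3,4) by (auto simp: J_def)
  define B where "B = {\<theta> \<in> space (PiM I M). f \<theta> + \<theta> p = 0}"
  have [measurable]: "(\<lambda>\<theta>. \<theta> p) \<in> borel_measurable (PiM I M)"
    using assms(2) by (rule borel_measurable_PiM_component)
  have B: "B \<in> sets (PiM I M)"
    unfolding B_def using f by measurable
  have "indicator B (x(p := y)) = (indicator {- f x} y :: ennreal)" if "x \<in> space (PiM J M)" for x y
  proof -
    have "x(p := y) \<in> space (PiM I M)"
      using that sets_eq_imp_space_eq[OF assms(2)] by (auto simp: I space_PiM intro!: PiE_fun_upd)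
    then show ?thesis
      by (auto simp: B_def f_indep indicator_def)
  qed
  then have "(\<integral>\<^sup>+ y. indicator B (x(p := y)) \<partial>M p) = 0" if "x \<in> space (PiM J M)" for x
    using that assms(2) by (simp add: no_atoms)
  moreover have "emeasure (PiM I M) B = (\<integral>\<^sup>+ x. (\<integral>\<^sup>+ y. indicator B (x(p := y)) \<partial>M p) \<partial>PiM J M)"
    using B by (simp add: I product_nn_integral_insert[OF \<open>finite J\<close> \<open>p \<notin> J\<close>, symmetric])
  ultimately have "B \<in> null_sets (PiM I M)"
    using B by (simp add: null_setsI cong: nn_integral_cong)
  then show ?thesis
    by (rule AE_I') (auto simp: B_def)
qed

text \<open>Factors outside \<^const>\<open>param_index\<close> do not affect the product measure; standard
  deviation 1 there makes every factor a probability measure.\<close>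
definition param_law :: "(nat \<Rightarrow> nat) \<Rightarrow> nat \<Rightarrow> real \<Rightarrow> param_idx \<Rightarrow> real measure" where
  "param_law n L Cb p =
     density lborel (normal_density 0 (if p \<in> param_index n L then sqrt (param_var n L Cb p) else 1))"

lemma relu_net_measure_eq_PiM_param_law:
  "relu_net_measure n L Cb = PiM (param_index n L) (param_law n L Cb)"
  unfolding relu_net_measure_def param_law_def by (rule PiM_cong) auto

lemma sets_param_law [measurable_cong]: "sets (param_law n L Cb p) = sets borel"
  by (simp add: param_law_def)

lemma param_var_pos:
  assumes "\<forall>l\<le>L. 1 \<le> n l" and "0 < Cb" and "p \<in> param_index n L"
  shows "0 < param_var n L Cb p"
proof -
  have "0 < n l" if "l \<le> L" for l
    using assms(1) that by fastforce
  with assms(2,3) show ?thesis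
    by (auto simp: param_index_def param_var_def intro!: divide_pos_pos)
qed

lemma prob_space_param_law:
  assumes "\<forall>l\<le>L. 1 \<le> n l" and "0 < Cb"
  shows "prob_space (param_law n L Cb p)"
  unfolding param_law_def using param_var_pos[OF assms] by (intro prob_space_normal_density) auto

lemma emeasure_param_law_singleton: "emeasure (param_law n L Cb p) {a} = 0"
  unfolding param_law_def by (simp add: emeasure_density AE_lborel_singleton nn_integral_0_iff_AE)

lemma prob_space_relu_net_measure:
  assumes "\<forall>l\<le>L. 1 \<le> n l" and "0 < Cb"
  shows "prob_space (relu_net_measure n L Cb)"
  unfolding relu_net_measure_eq_PiM_param_law
  using prob_space_param_law[OF assms] by (rule prob_space_PiM)

lemma borel_measurable_relu_net_param [measurable]:
  "(\<lambda>\<theta>. \<theta> p) \<in> borel_measurable (relu_net_measure n L Cb)"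
  unfolding relu_net_measure_eq_PiM_param_law
  by (rule borel_measurable_PiM_component) (simp add: sets_param_law)

lemma AE_nondegenerate:
  assumes "\<forall>l\<le>L. 1 \<le> n l" and "0 < Cb"
  shows "AE \<theta> in relu_net_measure n L Cb. nondegenerate n L \<theta> x"
proof -
  have "AE \<theta> in relu_net_measure n L Cb. preact n \<theta> (Suc l) x k \<noteq> 0" if "Suc l < L" "k < n (Suc l)" for l k
  proof -
    let ?p = "Inr (Suc l, k)"
    define f where "f = (\<lambda>\<theta>. \<Sum>k'<n l. \<theta> (Inl (Suc l, k, k')) * layer_output n \<theta> l x k')"
    have "f \<in> borel_measurable (relu_net_measure n L Cb)"
      unfolding f_def
      using borel_measurable_layer_output[where \<Theta> = "\<lambda>\<theta>. \<theta>" and X = "\<lambda>_. x"] by simp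
    moreover have "f (\<theta>(?p := y)) = f \<theta>" for \<theta> y
      unfolding f_def layer_output_def by (simp add: preact_fun_upd_bias cong: if_cong)
    moreover have "?p \<in> param_index n L"
      using that by (auto simp: param_index_def)
    ultimately have "AE \<theta> in relu_net_measure n L Cb. f \<theta> + \<theta> ?p \<noteq> 0"
      unfolding relu_net_measure_eq_PiM_param_law
      by (intro AE_PiM_add_component_neq_zero prob_space_param_law assms sets_param_law
          finite_param_index emeasure_param_law_singleton)
    then show ?thesis
      by (simp add: f_def preact_Suc_layer_output del: preact.simps)
  qed
  then have "AE \<theta> in relu_net_measure n L Cb. \<forall>l\<in>{..<L}. \<forall>k\<in>{..<n (Suc l)}.
      Suc l < L \<longrightarrow> preact n \<theta> (Suc l) x k \<noteq> 0"
    by (intro AE_finite_allI) auto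
  then show ?thesis
    by eventually_elim (auto simp: nondegenerate_def Suc_le_eq dest!: gr0_implies_Suc)
qed

section \<open>Length of the image curve\<close>

definition linearized_speed ::
    "(nat \<Rightarrow> nat) \<Rightarrow> nat \<Rightarrow> (nat \<Rightarrow> real \<Rightarrow> real) \<Rightarrow> real \<Rightarrow> (param_idx \<Rightarrow> real) \<Rightarrow> real" where
  "linearized_speed n L \<gamma> t \<theta> =
     vnorm (n L) (\<lambda>i. \<Sum>k<n 0. preact_jac n \<theta> L (curve_pt \<gamma> t) i k * curve_vel \<gamma> t k)"

lemma vnorm_nonneg: "0 \<le> vnorm k v"
  by (simp add: vnorm_def sum_nonneg)

lemma vnorm_cong: "(\<And>i. i < k \<Longrightarrow> u i = v i) \<Longrightarrow> vnorm k u = vnorm k v"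
  by (simp add: vnorm_def)

lemma vnorm_jac_apply_eq_linearized_speed:
  "nondegenerate n L \<theta> (curve_pt \<gamma> t) \<Longrightarrow>
    vnorm (n L) (jac_apply (n 0) (net n L \<theta>) (curve_pt \<gamma> t) (curve_vel \<gamma> t)) = linearized_speed n L \<gamma> t \<theta>"
  unfolding linearized_speed_def by (intro vnorm_cong jac_apply_if_nondegenerate)

lemma vnorm_vderiv_net_curve:
  assumes "smooth_curve (n 0) \<gamma>" and "t \<in> {0..1}" and "nondegenerate n L \<theta> (curve_pt \<gamma> t)"
  shows "vnorm (n L) (\<lambda>i. vderiv (\<lambda>s. net n L \<theta> (curve_pt \<gamma> s) i) t) = linearized_speed n L \<gamma> t \<theta>"
proof -
  have "vnorm (n L) (\<lambda>i. vderiv (\<lambda>s. net n L \<theta> (curve_pt \<gamma> s) i) t)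
      = vnorm (n L) (jac_apply (n 0) (net n L \<theta>) (curve_pt \<gamma> t) (curve_vel \<gamma> t))"
    using assms by (intro vnorm_cong vderiv_net_curve)
  with assms(3) show ?thesis
    by (simp add: vnorm_jac_apply_eq_linearized_speed)
qed

definition curve_cutoff :: "(nat \<Rightarrow> real \<Rightarrow> real) \<Rightarrow> real \<Rightarrow> nat \<Rightarrow> real" where
  "curve_cutoff c t = (\<lambda>k. indicator {0..1} t * c k t)"

lemma curve_cutoff_eq_curve_pt: "t \<in> {0..1} \<Longrightarrow> curve_cutoff c t = curve_pt c t"
  by (simp add: curve_cutoff_def curve_pt_def)

lemma borel_measurable_curve_cutoff:
  assumes "continuous_on {0..1} (c k)"
  shows "(\<lambda>p. curve_cutoff c (fst p) k) \<in> borel_measurable (lborel \<Otimes>\<^sub>M N)"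
proof (rule measurable_compose[OF measurable_fst])
  show "(\<lambda>t. curve_cutoff c t k) \<in> borel_measurable lborel"
    using borel_measurable_continuous_on_indicator[OF _ assms] by (simp add: curve_cutoff_def)
qed

lemma borel_measurable_linearized_speed:
  assumes "smooth_curve (n 0) \<gamma>"
  shows "(\<lambda>(t, \<theta>). indicator {0..1} t * linearized_speed n L \<gamma> t \<theta>)
           \<in> borel_measurable (lborel \<Otimes>\<^sub>M relu_net_measure n L Cb)"
proof -
  let ?M = "lborel \<Otimes>\<^sub>M relu_net_measure n L Cb" and ?X = "curve_cutoff \<gamma>"
    and ?V = "curve_cutoff (\<lambda>k. vderiv (\<gamma> k))"
  have [measurable]: "(\<lambda>p. ?V (fst p) k) \<in> borel_measurable ?M" if "k \<in> {..<n 0}" for k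
    using that by (simp add: borel_measurable_curve_cutoff smooth_curve_continuous_on_vderiv[OF assms])
  have [measurable]: "(\<lambda>p. preact_jac n (snd p) L (?X (fst p)) i k) \<in> borel_measurable ?M" for i k
    by (intro borel_measurable_preact_jac borel_measurable_curve_cutoff
        smooth_curve_continuous_on[OF assms]) simp
  have cut: "indicator {0..1} t * linearized_speed n L \<gamma> t \<theta>
      = indicator {0..1} t * vnorm (n L) (\<lambda>i. \<Sum>k<n 0. preact_jac n \<theta> L (?X t) i k * ?V t k)" for t \<theta>
    by (cases "t \<in> {0..1}")
      (simp_all add: linearized_speed_def curve_cutoff_eq_curve_pt curve_vel_def curve_pt_def)
  have "(\<lambda>p. indicator {0..1} (fst p) * vnorm (n L)
      (\<lambda>i. \<Sum>k<n 0. preact_jac n (snd p) L (?X (fst p)) i k * ?V (fst p) k)) \<in> borel_measurable ?M"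
    unfolding vnorm_def by measurable
  then show ?thesis
    by (simp only: case_prod_beta' cut)
qed

lemma AE_nondegenerate_on_curve:
  assumes "\<forall>l\<le>L. 1 \<le> n l" and "0 < Cb" and "smooth_curve (n 0) \<gamma>"
  shows "AE \<theta> in relu_net_measure n L Cb. AE t in lborel.
           t \<in> {0..1} \<longrightarrow> nondegenerate n L \<theta> (curve_pt \<gamma> t)"
proof -
  let ?M = "lborel \<Otimes>\<^sub>M relu_net_measure n L Cb"
  interpret pair_sigma_finite lborel "relu_net_measure n L Cb"
    using prob_space_relu_net_measure[OF assms(1,2)]
    by (simp add: pair_sigma_finite_def prob_space_imp_sigma_finite lborel.sigma_finite_measure_axioms)
  have [measurable]: "Measurable.pred ?M (\<lambda>p. nondegenerate n L (snd p) (curve_cutoff \<gamma> (fst p)))"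
    by (intro pred_nondegenerate borel_measurable_curve_cutoff smooth_curve_continuous_on[OF assms(3)])
      simp
  have "(t \<in> {0..1} \<longrightarrow> nondegenerate n L \<theta> (curve_cutoff \<gamma> t))
      \<longleftrightarrow> (t \<in> {0..1} \<longrightarrow> nondegenerate n L \<theta> (curve_pt \<gamma> t))" for t \<theta>
    by (auto simp: curve_cutoff_eq_curve_pt)
  moreover have "Measurable.pred ?M (\<lambda>p. fst p \<in> {0..1} \<longrightarrow> nondegenerate n L (snd p) (curve_cutoff \<gamma> (fst p)))"
    by measurable
  ultimately have "Measurable.pred ?M (\<lambda>p. fst p \<in> {0..1} \<longrightarrow> nondegenerate n L (snd p) (curve_pt \<gamma> (fst p)))"
    by (simp only:)
  moreover have "AE t in lborel. AE \<theta> in relu_net_measure n L Cb.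
      t \<in> {0..1} \<longrightarrow> nondegenerate n L \<theta> (curve_pt \<gamma> t)"
    using AE_nondegenerate[OF assms(1,2)] by (auto elim: eventually_mono)
  ultimately show ?thesis
    by (subst AE_commute[symmetric]) (simp_all add: pred_def)
qed

lemma AE_image_len_eq:
  assumes "\<forall>l\<le>L. 1 \<le> n l" and "0 < Cb" and "smooth_curve (n 0) \<gamma>"
  shows "AE \<theta> in relu_net_measure n L Cb.
           image_len (n L) (net n L \<theta>) \<gamma> = (\<integral>\<^sup>+ t\<in>{0..1}. ennreal (linearized_speed n L \<gamma> t \<theta>) \<partial>lborel)"
  using AE_nondegenerate_on_curve[OF assms]
proof eventually_elim
  case (elim \<theta>)
  then show ?case
    unfolding image_len_def
    by (intro nn_integral_cong_AE) (auto elim!: eventually_mono simp: vnorm_vderiv_net_curve[where n = n, OF assms(3)]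
        split: split_indicator)
qed

lemma nn_integral_vnorm_jac_apply_power:
  assumes "\<forall>l\<le>L. 1 \<le> n l" and "0 < Cb"
  shows "(\<integral>\<^sup>+ \<theta>. ennreal ((vnorm (n L) (jac_apply (n 0) (net n L \<theta>) (curve_pt \<gamma> t) (curve_vel \<gamma> t))) ^ m)
           \<partial>relu_net_measure n L Cb)
       = (\<integral>\<^sup>+ \<theta>. ennreal (linearized_speed n L \<gamma> t \<theta> ^ m) \<partial>relu_net_measure n L Cb)"
  using AE_nondegenerate[OF assms, of "curve_pt \<gamma> t"]
  by (intro nn_integral_cong_AE) (auto elim!: eventually_mono simp: vnorm_jac_apply_eq_linearized_speed)

theorem lemma2:
  fixes L :: nat and n :: "nat \<Rightarrow> nat" and Cb :: real
    and \<gamma> :: "nat \<Rightarrow> real \<Rightarrow> real" and m :: nat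
  assumes "1 \<le> L" and "\<forall>l\<le>L. 1 \<le> n l" and "0 < Cb"
    and "smooth_curve (n 0) \<gamma>" and "unit_speed (n 0) \<gamma>"
    and "1 \<le> m"
  shows "(\<forall>t\<in>{0..1}. AE \<theta> in relu_net_measure n L Cb.
            jacobian_exists (n 0) (n L) (net n L \<theta>) (curve_pt \<gamma> t))
       \<and> (\<integral>\<^sup>+ \<theta>. (image_len (n L) (net n L \<theta>) \<gamma>) ^ m \<partial>relu_net_measure n L Cb)
         \<le> (\<integral>\<^sup>+ t\<in>{0..1}.
               (\<integral>\<^sup>+ \<theta>. ennreal ((vnorm (n L)
                    (jac_apply (n 0) (net n L \<theta>) (curve_pt \<gamma> t) (curve_vel \<gamma> t))) ^ m)
                 \<partial>relu_net_measure n L Cb) \<partial>lborel)"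
proof
  let ?M = "relu_net_measure n L Cb"
  show "\<forall>t\<in>{0..1}. AE \<theta> in ?M. jacobian_exists (n 0) (n L) (net n L \<theta>) (curve_pt \<gamma> t)"
    using AE_nondegenerate[OF assms(2,3)]
    by (intro ballI eventually_mono[OF _ jacobian_exists_if_nondegenerate])
  interpret prob_space ?M
    using assms(2,3) by (rule prob_space_relu_net_measure)
  have "(\<integral>\<^sup>+ \<theta>. (image_len (n L) (net n L \<theta>) \<gamma>) ^ m \<partial>?M)
      = (\<integral>\<^sup>+ \<theta>. (\<integral>\<^sup>+ t\<in>{0..1}. ennreal (linearized_speed n L \<gamma> t \<theta>) \<partial>lborel) ^ m \<partial>?M)"
    using AE_image_len_eq[OF assms(2,3,4)] by (intro nn_integral_cong_AE) (auto elim: eventually_mono)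
  also have "\<dots> \<le> (\<integral>\<^sup>+ t\<in>{0..1}. (\<integral>\<^sup>+ \<theta>. ennreal (linearized_speed n L \<gamma> t \<theta> ^ m) \<partial>?M) \<partial>lborel)"
    using borel_measurable_linearized_speed[where n = n, OF assms(4)] assms(6)
    by (intro nn_integral_unit_interval_power_swap_le) (simp_all add: linearized_speed_def vnorm_nonneg)
  also have "\<dots> = (\<integral>\<^sup>+ t\<in>{0..1}. (\<integral>\<^sup>+ \<theta>. ennreal ((vnorm (n L)
      (jac_apply (n 0) (net n L \<theta>) (curve_pt \<gamma> t) (curve_vel \<gamma> t))) ^ m) \<partial>?M) \<partial>lborel)"
    by (simp add: nn_integral_vnorm_jac_apply_power[OF assms(2,3)])
  finally show "(\<integral>\<^sup>+ \<theta>. (image_len (n L) (net n L \<theta>) \<gamma>) ^ m \<partial>?M) \<le> \<dots>" .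
qed

end
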